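(* Let $n\ge 3$ and $1\le i\le n-2$ be integers, and let $\mathcal{A}=\{A_1,\dots,A_n\}$ with $A_1=\dots=A_i=[n]$, $A_{i+1}=\dots=A_{n-1}=[n]\setminus[i]$, $A_n=[n]$. Let $$A=\{\log(x_{j_1}x_{j_2}\cdots x_{j_n}) \mid j_k\in A_k \text{ for all } 1\le k\le n\}\subset\mathbb{N}^n$$ be the exponent set of the monomial generators of $K[\mathcal{A}]$. Then the cone $\mathbb{R}_+A$ has dimension $n$ and has the irreducible representation $$\mathbb{R}_+A=\bigcap_{a\in N}H_a^+,\qquad N=\{\nu_{[i]}\}\cup\{e_1,\dots,e_n\},$$ where $\nu_{[i]}=(-(n-i-1),\dots,-(n-i-1),\,i+1,\dots,i+1)\in\mathbb{Z}^n$ has its first $i$ entries equal to $-(n-i-1)$ and its last $n-i$ entries equal to $i+1$. Equivalently, $\mathbb{R}_+A=\{x\in\mathbb{R}^n \mid x_k\ge 0 \text{ for all } k,\ -(n-i-1)\sum_{k=1}^i x_k+(i+1)\sum_{k=i+1}^n x_k\ge 0\}$, and none of these $n+1$ half-spaces can be omitted. *)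

theory Defs
  imports "HOL-Analysis.Analysis"
begin

text \<open>Vectors of R^n are modelled as functions nat => real supported on the
index set {1..n}.\<close>

definition ambient :: "nat \<Rightarrow> (nat \<Rightarrow> real) set" where
  "ambient n = {x. \<forall>k. k \<notin> {1..n} \<longrightarrow> x k = 0}"

definition pos_cone :: "(nat \<Rightarrow> real) set \<Rightarrow> (nat \<Rightarrow> real) set" where
  "pos_cone S = {x. \<exists>F c. finite F \<and> F \<subseteq> S \<and> (\<forall>a\<in>F. c a \<ge> 0) \<and>
                        x = (\<lambda>k. \<Sum>a\<in>F. c a * a k)}"

definition lin_indep :: "(nat \<Rightarrow> real) set \<Rightarrow> bool" where
  "lin_indep B \<longleftrightarrow> (\<forall>c. (\<forall>k. (\<Sum>b\<in>B. c b * b k) = 0) \<longrightarrow> (\<forall>b\<in>B. c b = 0))"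

definition vdim :: "(nat \<Rightarrow> real) set \<Rightarrow> nat" where
  "vdim C = Sup {card B | B. finite B \<and> B \<subseteq> C \<and> lin_indep B}"

definition halfspace :: "nat \<Rightarrow> (nat \<Rightarrow> real) \<Rightarrow> (nat \<Rightarrow> real) set" where
  "halfspace n a = {x \<in> ambient n. (\<Sum>k=1..n. a k * x k) \<ge> 0}"

definition Aset :: "nat \<Rightarrow> nat \<Rightarrow> nat \<Rightarrow> nat set" where
  "Aset n i k = (if k \<le> i \<or> k = n then {1..n} else {i+1..n})"

definition expvec :: "nat \<Rightarrow> (nat \<Rightarrow> nat) \<Rightarrow> (nat \<Rightarrow> real)" where
  "expvec n j = (\<lambda>m. real (card {k\<in>{1..n}. j k = m}))"

definition expset :: "nat \<Rightarrow> nat \<Rightarrow> (nat \<Rightarrow> real) set" where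
  "expset n i = {expvec n j | j. \<forall>k\<in>{1..n}. j k \<in> Aset n i k}"

definition unitvec :: "nat \<Rightarrow> (nat \<Rightarrow> real)" where
  "unitvec k = (\<lambda>m. if m = k then 1 else 0)"

definition nu :: "nat \<Rightarrow> nat \<Rightarrow> (nat \<Rightarrow> real)" where
  "nu n i = (\<lambda>k. if 1 \<le> k \<and> k \<le> i then - (real n - real i - 1)
                 else if i < k \<and> k \<le> n then real i + 1 else 0)"

definition normals :: "nat \<Rightarrow> nat \<Rightarrow> (nat \<Rightarrow> real) set" where
  "normals n i = insert (nu n i) (unitvec ` {1..n})"

end

theory Submission
  imports Defs "HOL-Library.Function_Algebras"
begin

(* Proof of Lemma 4.1.  Write alpha = n-i-1 and beta = i+1; then the normal nu_[i] is
   (-alpha,...,-alpha, beta,...,beta).  The exponent set contains the generators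
     pair_gen a b = beta e_a + alpha e_b   (a <= i < b)  and  n e_b   (b > i).
   - Inclusion "cone <= halfspaces": every exponent vector satisfies x_k >= 0 and
     <nu,x> >= 0 (of the n factors, the n-i-1 middle ones contribute beta each, the
     other i+1 at least -alpha each), and half-spaces are closed under nonnegative
     combinations.
   - Inclusion "halfspaces <= cone": a point x >= 0 with alpha*S <= beta*T
     (S, T the sums of the first i and the last n-i coordinates) is the explicit
     nonnegative combination with weights x_a x_b/(beta T) on pair_gen a b and
     x_b (1 - alpha S/(beta T)) on e_b.
   - Dimension: n linearly independent vectors lie in ambient n, so vdim <= n; the
     triangular family pair_gen a n (a <= i), e_b (b > i) of cone vectors gives >= n.
   - Irredundancy: for each normal a we exhibit a point violating only H_a^+. *)

section \<open>Nonnegative combinations\<close>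

lemma pos_cone_base: "a \<in> S \<Longrightarrow> a \<in> pos_cone S"
  unfolding pos_cone_def by (intro CollectI exI[of _ "{a}"] exI[of _ "\<lambda>_. 1"]) auto

lemma pos_cone_zero: "(\<lambda>k. 0) \<in> pos_cone S"
  unfolding pos_cone_def by (intro CollectI exI[of _ "{}"]) auto

lemma pos_cone_add:
  assumes "x \<in> pos_cone S" "y \<in> pos_cone S"
  shows "(\<lambda>k. x k + y k) \<in> pos_cone S"
proof -
  obtain F1 c1 where F1: "finite F1" "F1 \<subseteq> S" "\<forall>a\<in>F1. c1 a \<ge> 0" and x: "x = (\<lambda>k. \<Sum>a\<in>F1. c1 a * a k)"
    using assms(1) unfolding pos_cone_def by blast
  obtain F2 c2 where F2: "finite F2" "F2 \<subseteq> S" "\<forall>a\<in>F2. c2 a \<ge> 0" and y: "y = (\<lambda>k. \<Sum>a\<in>F2. c2 a * a k)"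
    using assms(2) unfolding pos_cone_def by blast
  define d1 where "d1 a = (if a \<in> F1 then c1 a else 0)" for a
  define d2 where "d2 a = (if a \<in> F2 then c2 a else 0)" for a
  have extend: "(\<Sum>a\<in>F. c a * a k) = (\<Sum>a\<in>F1 \<union> F2. (if a \<in> F then c a else 0) * a k)"
    if "F \<subseteq> F1 \<union> F2" for F c k
    using that F1(1) F2(1) by (intro sum.mono_neutral_cong_left) auto
  have "(\<lambda>k. x k + y k) = (\<lambda>k. \<Sum>a\<in>F1 \<union> F2. (d1 a + d2 a) * a k)"
    unfolding x y d1_def d2_def
    by (simp add: extend[of F1 c1] extend[of F2 c2] distrib_right sum.distrib)
  moreover have "\<forall>a\<in>F1 \<union> F2. d1 a + d2 a \<ge> 0"
    using F1(3) F2(3) by (auto simp: d1_def d2_def)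
  ultimately show ?thesis
    using F1(1,2) F2(1,2) unfolding pos_cone_def
    by (intro CollectI exI[of _ "F1 \<union> F2"] exI[of _ "\<lambda>a. d1 a + d2 a"]) auto
qed

lemma pos_cone_scale:
  assumes "x \<in> pos_cone S" "t \<ge> 0"
  shows "(\<lambda>k. t * x k) \<in> pos_cone S"
proof -
  obtain F c where F: "finite F" "F \<subseteq> S" "\<forall>a\<in>F. c a \<ge> 0" and x: "x = (\<lambda>k. \<Sum>a\<in>F. c a * a k)"
    using assms(1) unfolding pos_cone_def by blast
  have "(\<lambda>k. t * x k) = (\<lambda>k. \<Sum>a\<in>F. (t * c a) * a k)"
    unfolding x by (simp add: sum_distrib_left mult.assoc)
  then show ?thesis
    using F assms(2) unfolding pos_cone_def
    by (intro CollectI exI[of _ F] exI[of _ "\<lambda>a. t * c a"]) auto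
qed

lemma pos_cone_sum:
  assumes "finite J" "\<forall>j\<in>J. f j \<in> pos_cone S"
  shows "(\<lambda>k. \<Sum>j\<in>J. f j k) \<in> pos_cone S"
  using assms
proof (induction J rule: finite_induct)
  case empty
  then show ?case using pos_cone_zero by simp
next
  case (insert j J)
  then show ?case using pos_cone_add[of "f j" S "\<lambda>k. \<Sum>j\<in>J. f j k"] by simp
qed

lemma pos_cone_halfspace:
  assumes "S \<subseteq> halfspace n w"
  shows "pos_cone S \<subseteq> halfspace n w"
proof
  fix x assume "x \<in> pos_cone S"
  then obtain F c where F: "finite F" "F \<subseteq> S" "\<forall>a\<in>F. c a \<ge> 0" and x: "x = (\<lambda>k. \<Sum>a\<in>F. c a * a k)"
    unfolding pos_cone_def by blast
  have "x \<in> ambient n"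
    using F assms unfolding x ambient_def halfspace_def by (auto intro!: sum.neutral)
  moreover have "(\<Sum>k=1..n. w k * x k) = (\<Sum>a\<in>F. c a * (\<Sum>k=1..n. w k * a k))"
    unfolding x sum_distrib_left by (subst sum.swap) (simp add: mult_ac)
  moreover have "\<dots> \<ge> 0"
    using F assms unfolding halfspace_def by (auto intro!: sum_nonneg)
  ultimately show "x \<in> halfspace n w" unfolding halfspace_def by simp
qed

section \<open>Linear independence and dimension\<close>

text \<open>Functions nat \<Rightarrow> real form a real vector space under pointwise operations;
  this lets us use the library's exchange lemma for independent sets.\<close>

definition fscale :: "real \<Rightarrow> (nat \<Rightarrow> real) \<Rightarrow> (nat \<Rightarrow> real)" where
  "fscale c f = (\<lambda>k. c * f k)"

interpretation fun_space: vector_space fscale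
  by unfold_locales (auto simp: fscale_def fun_eq_iff algebra_simps)

lemma sum_fun_apply: "(\<Sum>x\<in>A. f x) (k::nat) = (\<Sum>x\<in>A. f x k)" for f :: "'a \<Rightarrow> nat \<Rightarrow> real"
  by (induction A rule: infinite_finite_induct) auto

text \<open>An independent set of vectors supported on {1..n} has at most n elements:
  it lies in the span of the n unit vectors.\<close>

lemma lin_indep_card_le:
  assumes "finite B" "B \<subseteq> ambient n" "lin_indep B"
  shows "card B \<le> n"
proof -
  have indep: "fun_space.independent B"
  proof (rule fun_space.independent_if_scalars_zero[OF assms(1)])
    fix f x assume zero: "(\<Sum>x\<in>B. fscale (f x) x) = 0" and "x \<in> B"
    have "(\<Sum>b\<in>B. f b * b k) = 0" for k
      using fun_cong[OF zero, of k] by (simp add: sum_fun_apply fscale_def)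
    then show "f x = 0"
      using assms(3) \<open>x \<in> B\<close> unfolding lin_indep_def by blast
  qed
  have "x \<in> fun_space.span (unitvec ` {1..n})" if "x \<in> ambient n" for x
  proof -
    have "x m = (\<Sum>k\<in>{1..n}. fscale (x k) (unitvec k)) m" for m
      using that unfolding ambient_def sum_fun_apply fscale_def unitvec_def
      by (cases "m \<in> {1..n}") (auto simp: if_distrib cong: if_cong)
    then have "x = (\<Sum>k\<in>{1..n}. fscale (x k) (unitvec k))" ..
    also have "\<dots> \<in> fun_space.span (unitvec ` {1..n})"
      by (intro fun_space.span_sum fun_space.span_scale fun_space.span_base) auto
    finally show ?thesis .
  qed
  then have "B \<subseteq> fun_space.span (unitvec ` {1..n})"
    using assms(2) by blast
  then have "card B \<le> card (unitvec ` {1..n})"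
    using fun_space.independent_span_bound[OF _ indep] by blast
  also have "\<dots> \<le> n"
    using card_image_le[of "{1..n}" unitvec] by simp
  finally show ?thesis .
qed

lemma triangular_lin_indep:
  fixes v :: "nat \<Rightarrow> nat \<Rightarrow> real"
  assumes diag: "\<And>m. m \<in> {1..n} \<Longrightarrow> v m m \<noteq> 0"
    and upper: "\<And>p q. p \<in> {1..n} \<Longrightarrow> q \<in> {1..n} \<Longrightarrow> p < q \<Longrightarrow> v q p = 0"
  shows "inj_on v {1..n}" and "lin_indep (v ` {1..n})"
proof -
  show inj: "inj_on v {1..n}"
  proof (rule inj_onI)
    fix p q assume "p \<in> {1..n}" "q \<in> {1..n}" "v p = v q"
    then show "p = q"
      using diag upper by (metis linorder_neqE_nat)
  qed
  show "lin_indep (v ` {1..n})"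
    unfolding lin_indep_def
  proof (intro allI impI)
    fix c :: "(nat \<Rightarrow> real) \<Rightarrow> real"
    assume "\<forall>k. (\<Sum>b\<in>v ` {1..n}. c b * b k) = 0"
    then have vanish: "(\<Sum>m\<in>{1..n}. c (v m) * v m k) = 0" for k
      using sum.reindex[OF inj, of "\<lambda>b. c b * b k"] by simp
    have "c (v p) = 0" if "p \<in> {1..n}" for p
      using that
    proof (induction p rule: less_induct)
      case (less p)
      have "c (v m) * v m p = (if m = p then c (v p) * v p p else 0)" if "m \<in> {1..n}" for m
      proof (cases m p rule: linorder_cases)
        case less
        then show ?thesis using less.IH that by simp
      next
        case greater
        then show ?thesis using upper[OF less.prems that] by simp
      qed simp
      then have "(\<Sum>m\<in>{1..n}. c (v m) * v m p) = (\<Sum>m\<in>{1..n}. if m = p then c (v p) * v p p else 0)"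
        by (intro sum.cong refl)
      then have "c (v p) * v p p = 0"
        using vanish[of p] less.prems by (simp add: sum.delta)
      then show ?case using diag[OF less.prems] by simp
    qed
    then show "\<forall>b\<in>v ` {1..n}. c b = 0" by blast
  qed
qed

section \<open>The exponent set and its generators\<close>

lemma Aset_subset: "Aset n i k \<subseteq> {1..n}"
  unfolding Aset_def by auto

lemma dot_expvec:
  assumes "\<forall>k\<in>{1..n}. j k \<in> {1..n}"
  shows "(\<Sum>m=1..n. w m * expvec n j m) = (\<Sum>k=1..n. w (j k))"
proof -
  have "(\<Sum>m=1..n. w m * expvec n j m) = (\<Sum>m=1..n. \<Sum>k=1..n. if j k = m then w m else 0)"
    unfolding expvec_def by (simp add: sum.inter_filter[symmetric] sum_distrib_left mult.commute if_distrib cong: if_cong)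
  also have "\<dots> = (\<Sum>k=1..n. \<Sum>m=1..n. if j k = m then w m else 0)"
    by (rule sum.swap)
  also have "\<dots> = (\<Sum>k=1..n. w (j k))"
    using assms by (intro sum.cong) (auto simp: sum.delta)
  finally show ?thesis .
qed

lemma expset_ambient: "expset n i \<subseteq> ambient n"
proof
  fix x assume "x \<in> expset n i"
  then obtain j where x: "x = expvec n j" and j: "\<forall>k\<in>{1..n}. j k \<in> Aset n i k"
    unfolding expset_def by blast
  have "x m = 0" if "m \<notin> {1..n}" for m
  proof -
    have "{k\<in>{1..n}. j k = m} = {}" using j that Aset_subset by blast
    then show ?thesis unfolding x expvec_def by simp
  qed
  then show "x \<in> ambient n" unfolding ambient_def by blast
qed

lemma cone_ambient: "pos_cone (expset n i) \<subseteq> ambient n"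
proof -
  have "expset n i \<subseteq> halfspace n (\<lambda>_. 0)"
    using expset_ambient unfolding halfspace_def by auto
  then have "pos_cone (expset n i) \<subseteq> halfspace n (\<lambda>_. 0)"
    by (rule pos_cone_halfspace)
  then show ?thesis unfolding halfspace_def by blast
qed

text \<open>The mixed generator beta e_a + alpha e_b: choose the factor a in the first i
  positions and in the last one, and b in the n-i-1 middle ones.\<close>

definition pair_gen :: "nat \<Rightarrow> nat \<Rightarrow> nat \<Rightarrow> nat \<Rightarrow> (nat \<Rightarrow> real)" where
  "pair_gen n i a b = (\<lambda>m. if m = a then real i + 1 else if m = b then real n - real i - 1 else 0)"

lemma pair_gen_in_expset:
  assumes "1 \<le> a" "a \<le> i" "i < b" "b \<le> n"
  shows "pair_gen n i a b \<in> expset n i"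
proof -
  define j where "j k = (if k \<le> i \<or> k = n then a else b)" for k
  have "{k\<in>{1..n}. j k = a} = insert n {1..i}" "{k\<in>{1..n}. j k = b} = {i+1..<n}"
    using assms unfolding j_def by auto
  then have "expvec n j = pair_gen n i a b"
    using assms by (auto simp: fun_eq_iff expvec_def pair_gen_def j_def)
  moreover have "\<forall>k\<in>{1..n}. j k \<in> Aset n i k"
    using assms unfolding Aset_def j_def by auto
  ultimately show ?thesis unfolding expset_def by (intro CollectI exI[of _ j]) simp
qed

text \<open>Choosing b in every factor gives n e_b, so e_b lies in the cone for b > i.\<close>

lemma unitvec_in_cone:
  assumes "i < b" "b \<le> n"
  shows "unitvec b \<in> pos_cone (expset n i)"
proof -
  have "{k\<in>{1..n}. b = m} = (if m = b then {1..n} else {})" for m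
    by auto
  then have "expvec n (\<lambda>_. b) = (\<lambda>m. real n * unitvec b m)"
    by (auto simp: fun_eq_iff expvec_def unitvec_def)
  moreover have "\<forall>k\<in>{1..n}. b \<in> Aset n i k"
    using assms unfolding Aset_def by auto
  ultimately have "(\<lambda>m. real n * unitvec b m) \<in> pos_cone (expset n i)"
    unfolding expset_def by (intro pos_cone_base CollectI exI[of _ "\<lambda>_. b"]) simp
  from pos_cone_scale[OF this, of "1 / real n"] show ?thesis
    using assms by simp
qed

lemma dot_unitvec: "k \<in> {1..n} \<Longrightarrow> (\<Sum>m=1..n. w m * unitvec k m) = w k"
  unfolding unitvec_def by (simp add: if_distrib cong: if_cong)

lemma halfspace_unitvec_iff:
  "k \<in> {1..n} \<Longrightarrow> p \<in> halfspace n (unitvec k) \<longleftrightarrow> p \<in> ambient n \<and> p k \<ge> 0"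
  unfolding halfspace_def using dot_unitvec[of k n p] by (simp add: mult.commute)

lemma unitvec_ambient: "k \<in> {1..n} \<Longrightarrow> unitvec k \<in> ambient n"
  unfolding ambient_def unitvec_def by auto

lemma expset_halfspace_unitvec:
  assumes "k \<in> {1..n}"
  shows "expset n i \<subseteq> halfspace n (unitvec k)"
proof
  fix x assume "x \<in> expset n i"
  then show "x \<in> halfspace n (unitvec k)"
    unfolding halfspace_unitvec_iff[OF assms] using expset_ambient
    by (auto simp: expset_def expvec_def)
qed

lemma dot_nu:
  assumes "i < n"
  shows "(\<Sum>k=1..n. nu n i k * x k)
         = (real i + 1) * (\<Sum>k=i+1..n. x k) - (real n - real i - 1) * (\<Sum>k=1..i. x k)"
proof -
  have "{1..n} = {1..i} \<union> {i+1..n}" using assms by auto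
  then have "(\<Sum>k=1..n. nu n i k * x k) = (\<Sum>k=1..i. nu n i k * x k) + (\<Sum>k=i+1..n. nu n i k * x k)"
    by (simp add: sum.union_disjoint)
  also have "\<dots> = - (real n - real i - 1) * (\<Sum>k=1..i. x k) + (real i + 1) * (\<Sum>k=i+1..n. x k)"
    unfolding sum_distrib_left nu_def by (intro arg_cong2[where f = "(+)"] sum.cong) auto
  finally show ?thesis by (simp add: algebra_simps)
qed

text \<open>Every exponent vector lies in H_nu^+: each of the n-i-1 middle factors
  contributes beta, each of the remaining i+1 factors at least -alpha.\<close>

lemma expset_halfspace_nu:
  assumes "i < n"
  shows "expset n i \<subseteq> halfspace n (nu n i)"
proof
  fix x assume x_in: "x \<in> expset n i"
  then obtain j where x: "x = expvec n j" and j: "\<forall>k\<in>{1..n}. j k \<in> Aset n i k"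
    unfolding expset_def by blast
  have range: "\<forall>k\<in>{1..n}. j k \<in> {1..n}" using j Aset_subset by blast
  define P where "P = insert n {1..i}"
  define Q where "Q = {i+1..<n}"
  have PQ: "{1..n} = P \<union> Q" "P \<inter> Q = {}" "card P = i + 1" "card Q = n - i - 1"
    using assms unfolding P_def Q_def by auto
  have "nu n i (j k) \<ge> - (real n - real i - 1)" if "k \<in> P" for k
    using range that assms unfolding P_def nu_def by auto
  then have low: "(\<Sum>k\<in>P. nu n i (j k)) \<ge> - (real n - real i - 1) * (real i + 1)"
    using sum_mono[of P "\<lambda>_. - (real n - real i - 1)" "\<lambda>k. nu n i (j k)"] PQ(3) by (simp add: algebra_simps)
  have "j k \<in> {i+1..n}" if "k \<in> Q" for k
  proof -
    have "j k \<in> Aset n i k" using j that unfolding Q_def by auto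
    then show ?thesis using that unfolding Q_def Aset_def by auto
  qed
  then have "(\<Sum>k\<in>Q. nu n i (j k)) = (\<Sum>k\<in>Q. real i + 1)"
    unfolding nu_def by (intro sum.cong refl) fastforce
  then have high: "(\<Sum>k\<in>Q. nu n i (j k)) = (real n - real i - 1) * (real i + 1)"
    using PQ(4) assms by simp
  have "(\<Sum>m=1..n. nu n i m * x m) = (\<Sum>k=1..n. nu n i (j k))"
    unfolding x by (rule dot_expvec[OF range])
  also have "\<dots> = (\<Sum>k\<in>P. nu n i (j k)) + (\<Sum>k\<in>Q. nu n i (j k))"
    unfolding PQ(1) using PQ(2) by (intro sum.union_disjoint) (simp_all add: P_def Q_def)
  finally have "(\<Sum>m=1..n. nu n i m * x m) = (\<Sum>k\<in>P. nu n i (j k)) + (\<Sum>k\<in>Q. nu n i (j k))" .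
  then have "(\<Sum>m=1..n. nu n i m * x m) \<ge> 0"
    using low high by linarith
  then show "x \<in> halfspace n (nu n i)"
    using x_in expset_ambient unfolding halfspace_def by auto
qed

section \<open>The cone equals the intersection of the half-spaces\<close>

definition mix :: "nat \<Rightarrow> nat \<Rightarrow> (nat \<Rightarrow> nat \<Rightarrow> real) \<Rightarrow> (nat \<Rightarrow> real) \<Rightarrow> (nat \<Rightarrow> real)" where
  "mix n i lam mu = (\<lambda>k. (\<Sum>a=1..i. \<Sum>b=i+1..n. lam a b * pair_gen n i a b k)
                        + (\<Sum>b=i+1..n. mu b * unitvec b k))"

lemma mix_in_cone:
  assumes "\<And>a b. a \<in> {1..i} \<Longrightarrow> b \<in> {i+1..n} \<Longrightarrow> lam a b \<ge> 0"
    and "\<And>b. b \<in> {i+1..n} \<Longrightarrow> mu b \<ge> 0"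
  shows "mix n i lam mu \<in> pos_cone (expset n i)"
proof -
  have "(\<lambda>k. lam a b * pair_gen n i a b k) \<in> pos_cone (expset n i)"
    if "a \<in> {1..i}" "b \<in> {i+1..n}" for a b
    using that assms(1)[OF that] by (intro pos_cone_scale pos_cone_base pair_gen_in_expset) auto
  moreover have "(\<lambda>k. mu b * unitvec b k) \<in> pos_cone (expset n i)" if "b \<in> {i+1..n}" for b
    using that assms(2)[OF that] by (intro pos_cone_scale unitvec_in_cone) auto
  ultimately show ?thesis
    unfolding mix_def by (intro pos_cone_add pos_cone_sum finite_atLeastAtMost ballI) auto
qed

lemma mix_coord_low:
  assumes "a \<in> {1..i}" "i < n"
  shows "mix n i lam mu a = (real i + 1) * (\<Sum>b=i+1..n. lam a b)"
proof -
  have "pair_gen n i a' b a = (if a' = a then real i + 1 else 0)" if "b \<in> {i+1..n}" for a' b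
    using that assms by (auto simp: pair_gen_def)
  then have "(\<Sum>b=i+1..n. lam a' b * pair_gen n i a' b a)
             = (if a' = a then (real i + 1) * (\<Sum>b=i+1..n. lam a b) else 0)" for a'
    by (cases "a' = a") (simp_all add: sum_distrib_left mult.commute)
  moreover have "(\<Sum>b=i+1..n. mu b * unitvec b a) = 0"
    using assms by (simp add: unitvec_def)
  ultimately show ?thesis
    using assms unfolding mix_def by simp
qed

lemma mix_coord_high:
  assumes "b \<in> {i+1..n}"
  shows "mix n i lam mu b = (real n - real i - 1) * (\<Sum>a=1..i. lam a b) + mu b"
proof -
  have entry: "pair_gen n i a b' b = (if b' = b then real n - real i - 1 else 0)"
    if "a \<in> {1..i}" for a b'
    using that assms by (auto simp: pair_gen_def)
  have "(\<Sum>b'=i+1..n. lam a b' * pair_gen n i a b' b) = lam a b * (real n - real i - 1)"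
    if "a \<in> {1..i}" for a
    using assms by (simp add: entry[OF that] if_distrib cong: if_cong)
  moreover have "(\<Sum>b'=i+1..n. mu b' * unitvec b' b) = mu b"
    using assms by (simp add: unitvec_def if_distrib cong: if_cong)
  ultimately show ?thesis
    unfolding mix_def by (simp add: sum_distrib_left mult.commute)
qed

lemma mix_coord_out:
  assumes "k \<notin> {1..n}"
  shows "mix n i lam mu k = 0"
  using assms unfolding mix_def pair_gen_def unitvec_def by (auto intro!: sum.neutral)

text \<open>Reverse inclusion: a nonnegative x with alpha*S \<le> beta*T is the mixture with
  weights lam a b = x_a x_b / (beta T) and mu b = x_b (1 - alpha S / (beta T)).
  If T = 0 then also S = 0, and the formula degenerates correctly.\<close>

lemma halfspaces_in_cone:
  assumes "1 \<le> i" "i + 2 \<le> n"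
    and amb: "x \<in> ambient n" and pos: "\<forall>k\<in>{1..n}. x k \<ge> 0"
    and ineq: "(real n - real i - 1) * (\<Sum>k=1..i. x k) \<le> (real i + 1) * (\<Sum>k=i+1..n. x k)"
  shows "x \<in> pos_cone (expset n i)"
proof -
  define \<alpha> where "\<alpha> = real n - real i - 1"
  define \<beta> where "\<beta> = real i + 1"
  define S where "S = (\<Sum>k=1..i. x k)"
  define T where "T = (\<Sum>k=i+1..n. x k)"
  define q where "q = \<alpha> * S / (\<beta> * T)"
  have \<alpha>: "\<alpha> \<ge> 1" and \<beta>: "\<beta> > 0" using assms unfolding \<alpha>_def \<beta>_def by auto
  have S: "S \<ge> 0" and T: "T \<ge> 0"
    using pos assms unfolding S_def T_def by (auto intro!: sum_nonneg)
  have ineq': "\<alpha> * S \<le> \<beta> * T" using ineq unfolding \<alpha>_def \<beta>_def S_def T_def .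
  have q: "q \<le> 1"
    using ineq' \<beta> T unfolding q_def by (cases "T = 0") (auto simp: divide_le_eq)
  have low_zero: "x a = 0" if "T = 0" "a \<in> {1..i}" for a
  proof -
    have "S = 0" using ineq' that(1) \<alpha> S by (simp add: mult_le_0_iff)
    then show ?thesis
      using that(2) pos assms unfolding S_def by (subst (asm) sum_nonneg_eq_0_iff) auto
  qed
  define lam where "lam a b = x a * x b / (\<beta> * T)" for a b
  define mu where "mu b = x b * (1 - q)" for b
  have "x = mix n i lam mu"
  proof
    fix k
    consider "k \<in> {1..i}" | "k \<in> {i+1..n}" | "k \<notin> {1..n}" using assms by force
    then show "x k = mix n i lam mu k"
    proof cases
      case 1
      have "mix n i lam mu k = \<beta> * (\<Sum>b=i+1..n. x k * x b / (\<beta> * T))"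
        using mix_coord_low[OF 1] assms unfolding \<beta>_def lam_def by simp
      also have "\<dots> = (\<Sum>b=i+1..n. x k * x b) / T"
        using \<beta> by (simp add: sum_distrib_left sum_divide_distrib)
      also have "\<dots> = x k * T / T"
        unfolding T_def by (simp add: sum_distrib_left)
      also have "\<dots> = x k" using low_zero[OF _ 1] by (cases "T = 0") auto
      finally show ?thesis by simp
    next
      case 2
      have "mix n i lam mu k = \<alpha> * (\<Sum>a=1..i. x a * (x k / (\<beta> * T))) + mu k"
        using mix_coord_high[OF 2] unfolding \<alpha>_def lam_def by simp
      also have "\<dots> = x k * q + x k * (1 - q)"
        unfolding mu_def q_def S_def[symmetric] sum_distrib_right[symmetric] by simp
      finally show ?thesis by (simp add: algebra_simps)
    next
      case 3
      then show ?thesis using amb mix_coord_out unfolding ambient_def by auto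
    qed
  qed
  then show ?thesis
    using pos q \<beta> T by (auto simp: lam_def mu_def intro!: mix_in_cone)
qed

theorem cone_eq_halfspaces:
  assumes "1 \<le> i" "i + 2 \<le> n"
  shows "pos_cone (expset n i) = ambient n \<inter> (\<Inter>a\<in>normals n i. halfspace n a)"
proof
  have "expset n i \<subseteq> halfspace n a" if a: "a \<in> normals n i" for a
  proof (cases "a = nu n i")
    case True
    then show ?thesis using expset_halfspace_nu assms by simp
  next
    case False
    then obtain k where "k \<in> {1..n}" "a = unitvec k" using a unfolding normals_def by auto
    then show ?thesis using expset_halfspace_unitvec by simp
  qed
  then show "pos_cone (expset n i) \<subseteq> ambient n \<inter> (\<Inter>a\<in>normals n i. halfspace n a)"
    using pos_cone_halfspace cone_ambient by blast
next
  show "ambient n \<inter> (\<Inter>a\<in>normals n i. halfspace n a) \<subseteq> pos_cone (expset n i)"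
  proof
    fix x assume x: "x \<in> ambient n \<inter> (\<Inter>a\<in>normals n i. halfspace n a)"
    have "x \<in> halfspace n (unitvec k)" if "k \<in> {1..n}" for k
      using x that unfolding normals_def by blast
    then have "\<forall>k\<in>{1..n}. x k \<ge> 0"
      using halfspace_unitvec_iff by blast
    moreover have "x \<in> halfspace n (nu n i)"
      using x unfolding normals_def by blast
    then have "(\<Sum>k=1..n. nu n i k * x k) \<ge> 0"
      unfolding halfspace_def by blast
    then have "(real n - real i - 1) * (\<Sum>k=1..i. x k) \<le> (real i + 1) * (\<Sum>k=i+1..n. x k)"
      using dot_nu[of i n x] assms by simp
    ultimately show "x \<in> pos_cone (expset n i)"
      using x assms by (intro halfspaces_in_cone) auto
  qed
qed

text \<open>The cone is full-dimensional: the triangular family pair_gen a n (a \<le> i),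
  e_b (b > i) consists of n independent cone vectors, and no more than n fit in R^n.\<close>

theorem vdim_cone:
  assumes "1 \<le> i" "i + 2 \<le> n"
  shows "vdim (pos_cone (expset n i)) = n"
proof -
  define v where "v m = (if m \<le> i then pair_gen n i m n else unitvec m)" for m
  have "inj_on v {1..n}" and indep: "lin_indep (v ` {1..n})"
    using assms by (intro triangular_lin_indep; auto simp: v_def pair_gen_def unitvec_def)+
  moreover have "v m \<in> pos_cone (expset n i)" if "m \<in> {1..n}" for m
  proof (cases "m \<le> i")
    case True
    then show ?thesis using that assms by (auto simp: v_def intro!: pos_cone_base pair_gen_in_expset)
  next
    case False
    then show ?thesis using that by (auto simp: v_def intro!: unitvec_in_cone)
  qed
  ultimately have "n \<in> {card B |B. finite B \<and> B \<subseteq> pos_cone (expset n i) \<and> lin_indep B}"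
    by (intro CollectI exI[of _ "v ` {1..n}"]) (auto simp: card_image)
  then show ?thesis
    unfolding vdim_def using lin_indep_card_le cone_ambient
    by (intro cSup_eq_maximum) blast+
qed

section \<open>Irredundancy\<close>

lemma in_other_halfspaces:
  assumes "p \<in> ambient n"
    and "a \<noteq> nu n i \<Longrightarrow> (\<Sum>k=1..n. nu n i k * p k) \<ge> 0"
    and "\<And>k. k \<in> {1..n} \<Longrightarrow> unitvec k \<noteq> a \<Longrightarrow> p k \<ge> 0"
  shows "\<forall>b\<in>normals n i - {a}. p \<in> halfspace n b"
proof
  fix b assume b: "b \<in> normals n i - {a}"
  show "p \<in> halfspace n b"
  proof (cases "b = nu n i")
    case True
    then show ?thesis using assms(1,2) b unfolding halfspace_def by auto
  next
    case False
    then obtain k where "k \<in> {1..n}" "b = unitvec k" using b unfolding normals_def by auto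
    then show ?thesis using assms(1,3) b halfspace_unitvec_iff by auto
  qed
qed

text \<open>e_1 satisfies all coordinate inequalities but has <nu, e_1> = -alpha < 0.\<close>

lemma witness_nu:
  assumes "1 \<le> i" "i + 2 \<le> n"
  shows "\<exists>p. p \<in> ambient n \<and> (\<forall>b\<in>normals n i - {nu n i}. p \<in> halfspace n b) \<and> p \<notin> halfspace n (nu n i)"
proof (intro exI conjI)
  have one: "1 \<in> {1..n}" using assms by simp
  show "unitvec 1 \<in> ambient n" using unitvec_ambient[OF one] .
  show "\<forall>b\<in>normals n i - {nu n i}. unitvec 1 \<in> halfspace n b"
    using unitvec_ambient[OF one] by (intro in_other_halfspaces) (auto simp: unitvec_def)
  have "(\<Sum>m=1..n. nu n i m * unitvec 1 m) < 0"
    using dot_unitvec[OF one] assms by (simp add: nu_def)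
  then show "unitvec 1 \<notin> halfspace n (nu n i)" unfolding halfspace_def by simp
qed

text \<open>For k \<le> i, -e_k violates only x_k \<ge> 0: its pairing with nu is alpha \<ge> 0.\<close>

lemma witness_unit_low:
  assumes "k \<in> {1..i}" "i + 2 \<le> n"
  defines "p \<equiv> (\<lambda>m. - unitvec k m)"
  shows "p \<in> ambient n \<and> (\<forall>b\<in>normals n i - {unitvec k}. p \<in> halfspace n b) \<and> p \<notin> halfspace n (unitvec k)"
proof (intro conjI)
  have k: "k \<in> {1..n}" using assms by auto
  show amb: "p \<in> ambient n" using unitvec_ambient[OF k] unfolding p_def ambient_def by simp
  have "(\<Sum>m=1..n. nu n i m * p m) = - nu n i k"
    unfolding p_def using dot_unitvec[OF k, of "nu n i"] by (simp add: sum_negf)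
  then show "\<forall>b\<in>normals n i - {unitvec k}. p \<in> halfspace n b"
    using amb assms by (intro in_other_halfspaces) (auto simp: nu_def p_def unitvec_def)
  show "p \<notin> halfspace n (unitvec k)"
    using halfspace_unitvec_iff[OF k] by (simp add: p_def unitvec_def)
qed

lemma witness_unit_high:
  assumes "k \<in> {i+1..n}" "i + 2 \<le> n"
  defines "m0 \<equiv> (if k = n then n - 1 else n)"
  defines "p \<equiv> (\<lambda>m. unitvec m0 m - unitvec k m)"
  shows "p \<in> ambient n \<and> (\<forall>b\<in>normals n i - {unitvec k}. p \<in> halfspace n b) \<and> p \<notin> halfspace n (unitvec k)"
proof (intro conjI)
  have k: "k \<in> {1..n}" and m0: "m0 \<in> {i+1..n}" "m0 \<noteq> k" and m0_range: "m0 \<in> {1..n}"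
    using assms unfolding m0_def by auto
  show amb: "p \<in> ambient n"
    using k m0 unfolding p_def ambient_def unitvec_def by auto
  \<comment> \<open>p moves weight between two of the last n-i coordinates, so <nu,p> = beta - beta = 0\<close>
  have "(\<Sum>m=1..n. nu n i m * p m) = nu n i m0 - nu n i k"
    unfolding p_def right_diff_distrib sum_subtractf dot_unitvec[OF k] dot_unitvec[OF m0_range] ..
  then show "\<forall>b\<in>normals n i - {unitvec k}. p \<in> halfspace n b"
    using amb k m0 by (intro in_other_halfspaces) (auto simp: nu_def p_def unitvec_def)
  show "p \<notin> halfspace n (unitvec k)"
    using halfspace_unitvec_iff[OF k] m0 by (simp add: p_def unitvec_def)
qed

theorem halfspaces_irredundant:
  assumes "1 \<le> i" "i + 2 \<le> n" "a \<in> normals n i"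
  shows "ambient n \<inter> (\<Inter>b\<in>normals n i - {a}. halfspace n b) \<noteq> pos_cone (expset n i)"
proof -
  have "\<exists>p. p \<in> ambient n \<and> (\<forall>b\<in>normals n i - {a}. p \<in> halfspace n b) \<and> p \<notin> halfspace n a"
  proof (cases "a = nu n i")
    case True
    then show ?thesis using witness_nu[OF assms(1,2)] by simp
  next
    case False
    then obtain k where k: "k \<in> {1..n}" "a = unitvec k"
      using assms(3) unfolding normals_def by blast
    show ?thesis
    proof (cases "k \<le> i")
      case True
      then have "k \<in> {1..i}" using k by simp
      from witness_unit_low[OF this assms(2)] show ?thesis
        unfolding k(2) by (rule exI[of _ "\<lambda>m. - unitvec k m"])
    next
      case False
      then have "k \<in> {i+1..n}" using k by simp
      from witness_unit_high[OF this assms(2)] show ?thesis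
        unfolding k(2) by (rule exI[of _ "\<lambda>m. unitvec (if k = n then n - 1 else n) m - unitvec k m"])
    qed
  qed
  then show ?thesis
    using cone_eq_halfspaces[OF assms(1,2)] assms(3) by blast
qed

theorem lemma4p1:
  fixes n i :: nat
  assumes "n \<ge> 3" and "1 \<le> i" and "i \<le> n - 2"
  shows "vdim (pos_cone (expset n i)) = n
       \<and> pos_cone (expset n i) = ambient n \<inter> (\<Inter>a\<in>normals n i. halfspace n a)
       \<and> (\<forall>a\<in>normals n i.
            ambient n \<inter> (\<Inter>b\<in>normals n i - {a}. halfspace n b) \<noteq> pos_cone (expset n i))"
proof (intro conjI ballI)
  have n: "i + 2 \<le> n" using assms by simp
  show "vdim (pos_cone (expset n i)) = n"
    by (rule vdim_cone[OF assms(2) n])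
  show "pos_cone (expset n i) = ambient n \<inter> (\<Inter>a\<in>normals n i. halfspace n a)"
    by (rule cone_eq_halfspaces[OF assms(2) n])
  show "ambient n \<inter> (\<Inter>b\<in>normals n i - {a}. halfspace n b) \<noteq> pos_cone (expset n i)"
    if "a \<in> normals n i" for a
    by (rule halfspaces_irredundant[OF assms(2) n that])
qed

end
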